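(* Under the setting of the context, let $\mathbf e=e_1+\dots+e_d$. There exists a constant $C$, depending only on $E$, $P$ and $p$, such that for all $m\ge1$ and all integers $1\le n\le p\le q$, $$|R_q-R_n|^2+2\sum_{k=p}^{q-1}\langle m\mathbf e-R_n,(h-g)^-(\xi_k,R_k/m)\rangle+2\sum_{k=p}^{q-1}\langle R_n,(h-g)^+(\xi_k,R_k/m)\rangle\le|R_p-R_n|^2+C(q-p+m)+2\sum_{k=p}^{q-1}\langle R_k-R_n,Z_{k+1}\rangle.$$
   Context: Let $d\ge1$, $(e_1,\dots,e_d)$ the canonical basis, $\mathcal V=\{\pm e_1,\dots,\pm e_d\}$. Let $E$ be a finite set and $P$ an irreducible and aperiodic stochastic matrix on $E$ with unique invariant probability $\mu$. For $k\in E$, $y\in\mathbb R^d$, $p(k,y,\cdot)$ is a probability on $\mathcal V$, with $y\mapsto p(k,y,u)$ twice continuously differentiable with bounded derivatives. Let $g(k,y)=\sum_uu\,p(k,y,u)$, assumed to satisfy $\sum_k\mu(k)g(k,y)=0$ for all $y$, and $v(i,y)=\sum_{n\ge0}\sum_jP^n(i,j)g(j,y)$. Reflected kernel: for $k\in E$, $y\in[0,1]^d$, $\ell\le d$: if $0<y_\ell<1$, $q(k,y,\pm e_\ell)=p(k,y,\pm e_\ell)$; if $y_\ell=1$, $q(k,y,e_\ell)=0$, $q(k,y,-e_\ell)=p(k,y,e_\ell)+p(k,y,-e_\ell)$; if $y_\ell=0$, $q(k,y,-e_\ell)=0$, $q(k,y,e_\ell)=p(k,y,e_\ell)+p(k,y,-e_\ell)$;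 $h(k,y)=\sum_uu\,q(k,y,u)$; $c^{(m)}(i,y)=\sum_uq(i,y,u)[(v-g)(i,y+u/m)-(v-g)(i,y)]$. For $m\ge1$, $(\xi_n,R_n)_{n\ge0}$ is a Markov chain on $E\times\{0,\dots,m\}^d$ with $R_0=0$ and $\mathbb P(\xi_{n+1}=k,R_{n+1}=R_n+u\mid\xi_0,\dots,\xi_n,R_0,\dots,R_n)=P(\xi_n,k)q(\xi_n,R_n/m,u)$. $Z_{n+1}=R_{n+1}+v(\xi_{n+1},R_{n+1}/m)-[R_n+v(\xi_n,R_n/m)+(h-g)(\xi_n,R_n/m)+c^{(m)}(\xi_n,R_n/m)]$. For a vector $w$, $w^+$ and $w^-$ denote the coordinatewise positive and negative parts (so $w=w^+-w^-$, both with nonnegative entries). *)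

theory Defs
  imports "HOL-Analysis.Analysis"
begin

definition dirs :: "(real^'d) set" where
  "dirs = {axis l 1 | l. True} \<union> {axis l (-1) | l. True}"

primrec mpow :: "('e::finite \<Rightarrow> 'e \<Rightarrow> real) \<Rightarrow> nat \<Rightarrow> 'e \<Rightarrow> 'e \<Rightarrow> real" where
  "mpow P 0 i j = (if i = j then 1 else 0)"
| "mpow P (Suc n) i j = (\<Sum>k\<in>UNIV. mpow P n i k * P k j)"

definition stochastic :: "('e::finite \<Rightarrow> 'e \<Rightarrow> real) \<Rightarrow> bool" where
  "stochastic P \<longleftrightarrow> (\<forall>i j. 0 \<le> P i j) \<and> (\<forall>i. (\<Sum>j\<in>UNIV. P i j) = 1)"

definition irreducible_mc :: "('e::finite \<Rightarrow> 'e \<Rightarrow> real) \<Rightarrow> bool" where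
  "irreducible_mc P \<longleftrightarrow> (\<forall>i j. \<exists>n. mpow P n i j > 0)"

definition aperiodic_mc :: "('e::finite \<Rightarrow> 'e \<Rightarrow> real) \<Rightarrow> bool" where
  "aperiodic_mc P \<longleftrightarrow> (\<forall>i. Gcd {n::nat. 0 < n \<and> mpow P n i i > 0} = 1)"

definition invariant_prob :: "('e::finite \<Rightarrow> 'e \<Rightarrow> real) \<Rightarrow> ('e \<Rightarrow> real) \<Rightarrow> bool" where
  "invariant_prob P \<mu> \<longleftrightarrow> (\<forall>j. 0 \<le> \<mu> j) \<and> (\<Sum>j\<in>UNIV. \<mu> j) = 1
     \<and> (\<forall>j. (\<Sum>i\<in>UNIV. \<mu> i * P i j) = \<mu> j)"

definition C2_bdd :: "(real^'d \<Rightarrow> real) \<Rightarrow> bool" where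
  "C2_bdd f \<longleftrightarrow> (\<exists>(Df :: real^'d \<Rightarrow> ((real^'d) \<Rightarrow>\<^sub>L real))
       (D2f :: real^'d \<Rightarrow> ((real^'d) \<Rightarrow>\<^sub>L ((real^'d) \<Rightarrow>\<^sub>L real))) B.
     (\<forall>y. (f has_derivative blinfun_apply (Df y)) (at y)) \<and>
     (\<forall>y. (Df has_derivative blinfun_apply (D2f y)) (at y)) \<and>
     continuous_on UNIV D2f \<and>
     (\<forall>y. norm (Df y) \<le> B \<and> norm (D2f y) \<le> B))"

text \<open>g(k,y) = sum_u u p(k,y,u).\<close>
definition drift :: "('e \<Rightarrow> real^'d \<Rightarrow> real^'d \<Rightarrow> real) \<Rightarrow> 'e \<Rightarrow> real^'d \<Rightarrow> real^'d" where
  "drift p k y = (\<Sum>u\<in>dirs. p k y u *\<^sub>R u)"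

text \<open>v(i,y) = sum_{n>=0} sum_j P^n(i,j) g(j,y).\<close>
definition corr :: "('e::finite \<Rightarrow> 'e \<Rightarrow> real) \<Rightarrow> ('e \<Rightarrow> real^'d \<Rightarrow> real^'d \<Rightarrow> real)
    \<Rightarrow> 'e \<Rightarrow> real^'d \<Rightarrow> real^'d" where
  "corr P p i y = (\<Sum>n. \<Sum>j\<in>UNIV. mpow P n i j *\<^sub>R drift p j y)"

definition qref :: "('e \<Rightarrow> real^'d \<Rightarrow> real^'d \<Rightarrow> real) \<Rightarrow> 'e \<Rightarrow> real^'d \<Rightarrow> real^'d \<Rightarrow> real" where
  "qref p k y u =
     (if (\<exists>l. u = axis l 1) then
        (let l = (SOME l. u = axis l 1) in
          if y $ l = 1 then 0
          else if y $ l = 0 then p k y (axis l 1) + p k y (axis l (-1))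
          else p k y u)
      else if (\<exists>l. u = axis l (-1)) then
        (let l = (SOME l. u = axis l (-1)) in
          if y $ l = 0 then 0
          else if y $ l = 1 then p k y (axis l 1) + p k y (axis l (-1))
          else p k y u)
      else 0)"

text \<open>h(k,y) = sum_u u q(k,y,u).\<close>
definition rdrift :: "('e \<Rightarrow> real^'d \<Rightarrow> real^'d \<Rightarrow> real) \<Rightarrow> 'e \<Rightarrow> real^'d \<Rightarrow> real^'d" where
  "rdrift p k y = (\<Sum>u\<in>dirs. qref p k y u *\<^sub>R u)"

definition cm :: "('e::finite \<Rightarrow> 'e \<Rightarrow> real) \<Rightarrow> ('e \<Rightarrow> real^'d \<Rightarrow> real^'d \<Rightarrow> real) \<Rightarrow> nat
    \<Rightarrow> 'e \<Rightarrow> real^'d \<Rightarrow> real^'d" where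
  "cm P p m i y = (\<Sum>u\<in>dirs. qref p i y u *\<^sub>R
      ((corr P p i (y + inverse (real m) *\<^sub>R u) - drift p i (y + inverse (real m) *\<^sub>R u))
       - (corr P p i y - drift p i y)))"

text \<open>Zsucc P p m xi R n is Z_{n+1}.\<close>
definition Zsucc :: "('e::finite \<Rightarrow> 'e \<Rightarrow> real) \<Rightarrow> ('e \<Rightarrow> real^'d \<Rightarrow> real^'d \<Rightarrow> real) \<Rightarrow> nat
    \<Rightarrow> (nat \<Rightarrow> 'e) \<Rightarrow> (nat \<Rightarrow> real^'d) \<Rightarrow> nat \<Rightarrow> real^'d" where
  "Zsucc P p m \<xi> R n =
     (let y = inverse (real m) *\<^sub>R R n;
          y' = inverse (real m) *\<^sub>R R (Suc n)
      in R (Suc n) + corr P p (\<xi> (Suc n)) y'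
         - (R n + corr P p (\<xi> n) y + (rdrift p (\<xi> n) y - drift p (\<xi> n) y) + cm P p m (\<xi> n) y))"

definition pos_part :: "real^'d \<Rightarrow> real^'d" where
  "pos_part w = (\<chi> i. max (w $ i) 0)"

definition neg_part :: "real^'d \<Rightarrow> real^'d" where
  "neg_part w = (\<chi> i. max (- (w $ i)) 0)"

definition ones :: "real^'d" where
  "ones = (\<chi> i. 1)"

end

theory Submission
  imports Defs
begin

(* The inequality is deterministic: it holds along every admissible path of the walk.
   Write y_k = R_k/m and v_k = v(xi_k, y_k).  By the definition of Z_{k+1}, the step
   u_k = R_{k+1} - R_k equals Z_{k+1} - v_{k+1} + v_k + (h-g)(xi_k, y_k) + c^(m)(xi_k, y_k), so the
   energy E_k = |R_k - R_n|^2 + 2 <R_k - R_n, v_k> satisfies, since |u_k| = 1,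
     E_{k+1} = E_k + 1 + 2 <R_k - R_n, Z_{k+1}> + 2 <R_k - R_n, h - g> + 2 <R_k - R_n, c^(m)> + 2 <u_k, v_{k+1}>.
   The walk stays on the grid {0..m}^d, and h - g only acts on the faces of the box, pointing inward;
   hence <R_k - R_n, h - g> = - <R_n, (h-g)^+> - <m e - R_n, (h-g)^->.  As g and v are Lipschitz,
   c^(m) = O(1/m) while |R_k - R_n| = O(m), and v is bounded, so every other term is O(1) per step and
   E_k differs from |R_k - R_n|^2 by O(m).
   That v is bounded and Lipschitz follows from Doeblin's argument: some power P^N has all entries at
   least delta > 0, so P^n contracts functions of mu-mean zero geometrically, and g(., y) has
   mu-mean zero for every y. *)

section \<open>Powers of an irreducible aperiodic stochastic matrix\<close>

lemma mpow_nonneg: "stochastic P \<Longrightarrow> 0 \<le> mpow P n i j"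
  by (induction n arbitrary: j) (auto simp: stochastic_def intro!: sum_nonneg)

lemma mpow_row_sum: "stochastic P \<Longrightarrow> (\<Sum>j\<in>UNIV. mpow P n i j) = 1"
proof (induction n)
  case (Suc n)
  have "(\<Sum>j\<in>UNIV. mpow P (Suc n) i j) = (\<Sum>j\<in>UNIV. \<Sum>k\<in>UNIV. mpow P n i k * P k j)"
    by simp
  also have "\<dots> = (\<Sum>k\<in>UNIV. mpow P n i k * (\<Sum>j\<in>UNIV. P k j))"
    by (subst sum.swap) (simp only: sum_distrib_left)
  finally show ?case
    using Suc by (simp add: stochastic_def)
qed simp

lemma mpow_add: "mpow P (a + b) i j = (\<Sum>k\<in>UNIV. mpow P a i k * mpow P b k j)"
proof (induction b arbitrary: j)
  case 0
  then show ?case by (simp add: if_distrib cong: if_cong)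
next
  case (Suc b)
  have "mpow P (a + Suc b) i j = (\<Sum>l\<in>UNIV. \<Sum>k\<in>UNIV. mpow P a i k * (mpow P b k l * P l j))"
    using Suc by (simp only: add_Suc_right mpow.simps sum_distrib_right mult.assoc)
  also have "\<dots> = (\<Sum>k\<in>UNIV. mpow P a i k * mpow P (Suc b) k j)"
    by (subst sum.swap) (simp only: sum_distrib_left mpow.simps)
  finally show ?case .
qed

lemma mpow_invariant: "invariant_prob P \<mu> \<Longrightarrow> (\<Sum>i\<in>UNIV. \<mu> i * mpow P n i j) = \<mu> j"
proof (induction n arbitrary: j)
  case 0
  then show ?case by (simp add: if_distrib cong: if_cong)
next
  case (Suc n)
  have "(\<Sum>i\<in>UNIV. \<mu> i * mpow P (Suc n) i j) = (\<Sum>i\<in>UNIV. \<Sum>k\<in>UNIV. \<mu> i * mpow P n i k * P k j)"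
    by (simp only: mpow.simps sum_distrib_left mult.assoc)
  also have "\<dots> = (\<Sum>k\<in>UNIV. (\<Sum>i\<in>UNIV. \<mu> i * mpow P n i k) * P k j)"
    by (subst sum.swap) (simp only: sum_distrib_right)
  finally show ?case
    using Suc by (simp add: invariant_prob_def)
qed

lemma mpow_mult_le_mpow_add:
  "stochastic P \<Longrightarrow> mpow P a i k * mpow P b k j \<le> mpow P (a + b) i j"
  unfolding mpow_add
  by (rule member_le_sum[where f = "\<lambda>k. mpow P a i k * mpow P b k j"]) (auto simp: mpow_nonneg)

lemma add_closed_insert_0:
  fixes S :: "nat set"
  assumes "\<And>a b. a \<in> S \<Longrightarrow> b \<in> S \<Longrightarrow> a + b \<in> S" and "x \<in> insert 0 S" and "x' \<in> insert 0 S"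
  shows "x + x' \<in> insert 0 S"
  using assms by auto

lemma add_closed_insert_0_mult:
  fixes S :: "nat set"
  assumes "\<And>a b. a \<in> S \<Longrightarrow> b \<in> S \<Longrightarrow> a + b \<in> S" and "x \<in> insert 0 S"
  shows "k * x \<in> insert 0 S"
  by (induction k) (use add_closed_insert_0[OF assms(1)] assms(2) in auto)

lemma add_closed_Gcd_eq_1_consecutive:
  fixes S :: "nat set"
  assumes add_closed: "\<And>a b. a \<in> S \<Longrightarrow> b \<in> S \<Longrightarrow> a + b \<in> S"
    and Gcd: "Gcd S = 1"
  obtains y where "y \<in> insert 0 S" and "y + 1 \<in> insert 0 S"
proof -
  define S0 where "S0 = insert 0 S"
  obtain s where "s \<in> S" "0 < s"
  proof -
    have "\<not> S \<subseteq> {0}"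
      using Gcd Gcd_0_iff[of S] by auto
    then show ?thesis using that by blast
  qed
  then have gap: "\<exists>d. 0 < d \<and> (\<exists>y\<in>S0. y + d \<in> S0)"
    by (auto simp: S0_def)
  \<comment> \<open>The least gap d between two elements of S0 divides every element of S, hence is 1.\<close>
  define d where "d = (LEAST d. 0 < d \<and> (\<exists>y\<in>S0. y + d \<in> S0))"
  obtain y where y: "y \<in> S0" "y + d \<in> S0" "0 < d"
    using LeastI_ex[OF gap] unfolding d_def by blast
  have "d dvd s" if "s \<in> S" for s
  proof -
    have "(s div d) * (y + d) + s mod d = (s div d) * y + s"
      using div_mult_mod_eq[of s d] by (simp add: algebra_simps)
    also have "\<dots> \<in> S0"
      unfolding S0_def using add_closed_insert_0_mult[OF add_closed y(1)[unfolded S0_def]] \<open>s \<in> S\<close>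
      by (intro add_closed_insert_0[OF add_closed]) auto
    finally have "(s div d) * (y + d) + s mod d \<in> S0" .
    moreover have "s mod d < d"
      using y(3) by simp
    moreover have "(s div d) * (y + d) \<in> S0"
      unfolding S0_def by (rule add_closed_insert_0_mult[OF add_closed y(2)[unfolded S0_def]])
    ultimately have "s mod d = 0"
      using not_less_Least[of "s mod d" "\<lambda>d. 0 < d \<and> (\<exists>y\<in>S0. y + d \<in> S0)"]
      unfolding d_def[symmetric] by (metis gr0I)
    then show ?thesis by (simp add: mod_eq_0_iff_dvd)
  qed
  then have "d = 1"
    using Gcd_greatest[of S d] Gcd by simp
  then show ?thesis
    using that y unfolding S0_def by simp
qed

lemma add_closed_Gcd_eq_1_eventually:
  fixes S :: "nat set"
  assumes add_closed: "\<And>a b. a \<in> S \<Longrightarrow> b \<in> S \<Longrightarrow> a + b \<in> S"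
    and "Gcd S = 1"
  shows "eventually (\<lambda>n. n \<in> S) sequentially"
proof -
  obtain y where y: "y \<in> insert 0 S" "y + 1 \<in> insert 0 S"
    using add_closed_Gcd_eq_1_consecutive[OF assms] .
  have "n \<in> insert 0 S" if "y * y + 1 \<le> n" for n
  proof (cases "y = 0")
    case True
    then show ?thesis
      using add_closed_insert_0_mult[OF add_closed y(2), of n] by simp
  next
    case False
    define a r where "a = n div y" and "r = n mod y"
    have "r < y" using False by (simp add: r_def)
    moreover have "y \<le> a"
    proof -
      have "y * y div y \<le> n div y"
        using that by (intro div_le_mono) simp
      then show ?thesis using False by (simp add: a_def)
    qed
    ultimately have "n = (a - r) * y + r * (y + 1)"
      by (simp add: a_def r_def algebra_simps diff_mult_distrib)
    also have "\<dots> \<in> insert 0 S"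
      using add_closed_insert_0_mult[OF add_closed] y by (intro add_closed_insert_0[OF add_closed])
    finally show ?thesis .
  qed
  then show ?thesis
    unfolding eventually_sequentially by auto
qed

lemma eventually_mpow_diag_pos:
  assumes "stochastic P" and "aperiodic_mc P"
  shows "eventually (\<lambda>n. 0 < mpow P n i i) sequentially"
proof -
  have "eventually (\<lambda>n. n \<in> {n. 0 < n \<and> 0 < mpow P n i i}) sequentially"
  proof (rule add_closed_Gcd_eq_1_eventually)
    fix a b assume "a \<in> {n. 0 < n \<and> 0 < mpow P n i i}" "b \<in> {n. 0 < n \<and> 0 < mpow P n i i}"
    then show "a + b \<in> {n. 0 < n \<and> 0 < mpow P n i i}"
      using mpow_mult_le_mpow_add[OF assms(1), of a i i b i]
      by (auto intro: order_less_le_trans[OF mult_pos_pos])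
  qed (use assms(2) in \<open>simp add: aperiodic_mc_def\<close>)
  then show ?thesis
    by (rule eventually_mono) simp
qed

lemma irreducible_aperiodic_eventually_mpow_pos:
  assumes st: "stochastic P" and "irreducible_mc P" and "aperiodic_mc P"
  shows "eventually (\<lambda>n. \<forall>i j. 0 < mpow P n i j) sequentially"
proof -
  have "eventually (\<lambda>n. 0 < mpow P n i j) sequentially" for i j
  proof -
    obtain r where r: "0 < mpow P r i j"
      using \<open>irreducible_mc P\<close> by (auto simp: irreducible_mc_def)
    obtain N where N: "\<And>n. N \<le> n \<Longrightarrow> 0 < mpow P n i i"
      using eventually_mpow_diag_pos[OF st \<open>aperiodic_mc P\<close>] by (auto simp: eventually_sequentially)
    have "0 < mpow P n i j" if "N + r \<le> n" for n
    proof -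
      have "0 < mpow P (n - r) i i * mpow P r i j"
        using N[of "n - r"] r that by simp
      also have "\<dots> \<le> mpow P n i j"
        using mpow_mult_le_mpow_add[OF st, of "n - r" i i r j] that by simp
      finally show ?thesis .
    qed
    then show ?thesis
      by (auto simp: eventually_sequentially)
  qed
  then show ?thesis
    by (intro eventually_all_finite allI)
qed

section \<open>Geometric ergodicity\<close>

definition mpow_apply :: "('e::finite \<Rightarrow> 'e \<Rightarrow> real) \<Rightarrow> nat \<Rightarrow> ('e \<Rightarrow> 'a::real_vector) \<Rightarrow> 'e \<Rightarrow> 'a" where
  "mpow_apply P n f i = (\<Sum>j\<in>UNIV. mpow P n i j *\<^sub>R f j)"

lemma mpow_apply_add: "mpow_apply P (a + b) f i = mpow_apply P a (mpow_apply P b f) i"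
proof -
  have "mpow_apply P (a + b) f i = (\<Sum>j\<in>UNIV. \<Sum>k\<in>UNIV. mpow P a i k *\<^sub>R (mpow P b k j *\<^sub>R f j))"
    by (simp only: mpow_apply_def mpow_add scaleR_sum_left scaleR_scaleR)
  also have "\<dots> = mpow_apply P a (mpow_apply P b f) i"
    by (subst sum.swap) (simp only: mpow_apply_def scaleR_sum_right)
  finally show ?thesis .
qed

lemma mpow_apply_invariant_mean:
  assumes "invariant_prob P \<mu>"
  shows "(\<Sum>i\<in>UNIV. \<mu> i *\<^sub>R mpow_apply P n f i) = (\<Sum>j\<in>UNIV. \<mu> j *\<^sub>R f j)"
proof -
  have "(\<Sum>i\<in>UNIV. \<mu> i *\<^sub>R mpow_apply P n f i) = (\<Sum>i\<in>UNIV. \<Sum>j\<in>UNIV. (\<mu> i * mpow P n i j) *\<^sub>R f j)"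
    by (simp only: mpow_apply_def scaleR_sum_right scaleR_scaleR)
  also have "\<dots> = (\<Sum>j\<in>UNIV. (\<Sum>i\<in>UNIV. \<mu> i * mpow P n i j) *\<^sub>R f j)"
    by (subst sum.swap) (simp only: scaleR_sum_left)
  finally show ?thesis
    using mpow_invariant[OF assms] by simp
qed

lemma mpow_apply_diff: "mpow_apply P n (\<lambda>j. f j - g j) i = mpow_apply P n f i - mpow_apply P n g i"
  by (simp add: mpow_apply_def scaleR_diff_right sum_subtractf)

lemma norm_mpow_apply_le:
  assumes "stochastic P" and "\<And>j. norm (f j) \<le> b"
  shows "norm (mpow_apply P n f i) \<le> b"
proof -
  have "norm (mpow_apply P n f i) \<le> (\<Sum>j\<in>UNIV. mpow P n i j * b)"
    unfolding mpow_apply_def using assms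
    by (intro order_trans[OF norm_sum] sum_mono) (simp add: mpow_nonneg mult_left_mono)
  then show ?thesis
    using mpow_row_sum[OF assms(1)] by (simp add: sum_distrib_right[symmetric])
qed

lemma norm_mpow_apply_contract:
  assumes st: "stochastic P" and inv: "invariant_prob P \<mu>"
    and doeblin: "\<And>i j. \<delta> \<le> mpow P N i j" and "0 \<le> \<delta>"
    and centred: "(\<Sum>j\<in>UNIV. \<mu> j *\<^sub>R f j) = 0"
    and bound: "\<And>j. norm (f j) \<le> b"
  shows "norm (mpow_apply P N f i) \<le> (1 - \<delta>) * b"
proof -
  have "\<mu> j \<le> 1" for j
    using inv member_le_sum[of j UNIV \<mu>] by (simp add: invariant_prob_def)
  then have small: "\<delta> * \<mu> j \<le> \<delta>" for j
    using \<open>0 \<le> \<delta>\<close> by (simp add: mult_left_le)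
  have nonneg: "0 \<le> mpow P N i j - \<delta> * \<mu> j" for j
    using doeblin[of i j] small[of j] by linarith
  have "mpow_apply P N f i = (\<Sum>j\<in>UNIV. mpow P N i j *\<^sub>R f j) - \<delta> *\<^sub>R (\<Sum>j\<in>UNIV. \<mu> j *\<^sub>R f j)"
    using centred by (simp add: mpow_apply_def)
  also have "\<dots> = (\<Sum>j\<in>UNIV. (mpow P N i j - \<delta> * \<mu> j) *\<^sub>R f j)"
    by (simp add: scaleR_sum_right scaleR_diff_left sum_subtractf)
  finally have "norm (mpow_apply P N f i) \<le> (\<Sum>j\<in>UNIV. (mpow P N i j - \<delta> * \<mu> j) * b)"
    using nonneg bound by (auto intro!: order_trans[OF norm_sum] sum_mono mult_left_mono)
  also have "\<dots> = (1 - \<delta>) * b"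
    using mpow_row_sum[OF st] inv
    by (simp add: sum_distrib_right[symmetric] sum_subtractf sum_distrib_left[symmetric] invariant_prob_def)
  finally show ?thesis .
qed

lemma norm_mpow_apply_power_contract:
  assumes st: "stochastic P" and inv: "invariant_prob P \<mu>"
    and doeblin: "\<And>i j. \<delta> \<le> mpow P N i j" and "0 \<le> \<delta>"
  shows "(\<Sum>j\<in>UNIV. \<mu> j *\<^sub>R f j) = 0 \<Longrightarrow> (\<And>j. norm (f j) \<le> b) \<Longrightarrow>
    norm (mpow_apply P (N * k + r) f i) \<le> (1 - \<delta>) ^ k * b"
proof (induction k arbitrary: f b)
  case 0
  then show ?case
    using norm_mpow_apply_le[OF st "0.prems"(2)] by simp
next
  case (Suc k)
  have "norm (mpow_apply P (N * k + r) (mpow_apply P N f) i) \<le> (1 - \<delta>) ^ k * ((1 - \<delta>) * b)"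
  proof (rule Suc.IH)
    show "(\<Sum>j\<in>UNIV. \<mu> j *\<^sub>R mpow_apply P N f j) = 0"
      unfolding mpow_apply_invariant_mean[OF inv] by (rule Suc.prems(1))
    show "norm (mpow_apply P N f j) \<le> (1 - \<delta>) * b" for j
      using norm_mpow_apply_contract[OF st inv doeblin \<open>0 \<le> \<delta>\<close> Suc.prems] .
  qed
  moreover have "N * Suc k + r = (N * k + r) + N"
    by simp
  ultimately show ?case
    by (simp only: mpow_apply_add) (simp add: mult_ac)
qed

lemma primitive_doeblin:
  assumes "stochastic P" and "irreducible_mc P" and "aperiodic_mc P"
  obtains N \<delta> where "0 < N" and "0 < \<delta>" and "\<delta> \<le> 1/2" and "\<And>i j. \<delta> \<le> mpow P N i j"
proof -
  obtain N where "0 < N" and pos: "\<And>i j. 0 < mpow P N i j"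
  proof -
    obtain N0 where "\<And>n. N0 \<le> n \<Longrightarrow> \<forall>i j. 0 < mpow P n i j"
      using irreducible_aperiodic_eventually_mpow_pos[OF assms] by (auto simp: eventually_sequentially)
    then show ?thesis
      using that[of "Suc N0"] by (simp del: mpow.simps)
  qed
  define entries where "entries = range (\<lambda>(i, j). mpow P N i j)"
  have "finite entries" and "entries \<noteq> {}"
    by (simp_all add: entries_def)
  moreover have "\<forall>x\<in>entries. 0 < x"
    using pos by (auto simp: entries_def)
  ultimately have "0 < min (Min entries) (1/2)"
    by simp
  moreover have "min (Min entries) (1/2) \<le> mpow P N i j" for i j
  proof -
    have "mpow P N i j \<in> entries"
      unfolding entries_def by (rule rev_image_eqI[of "(i, j)"]) simp_all
    then show ?thesis
      using Min_le[OF \<open>finite entries\<close>] by (simp add: min_le_iff_disj)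
  qed
  ultimately show ?thesis
    using that[of N "min (Min entries) (1/2)"] \<open>0 < N\<close> by simp
qed

lemma power_div_le_root_power:
  fixes \<theta> :: real
  assumes "0 < \<theta>" and "\<theta> \<le> 1" and "0 < N"
  shows "\<theta> ^ (n div N) \<le> root N \<theta> ^ n / \<theta>"
proof -
  have "\<theta> ^ (n div N) * \<theta> = root N \<theta> ^ (N * (n div N) + N)"
    using assms by (simp add: power_add power_mult real_root_pow_pos2 mult.commute)
  also have "\<dots> \<le> root N \<theta> ^ n"
  proof (rule power_decreasing)
    have "n = N * (n div N) + n mod N" and "n mod N < N"
      using \<open>0 < N\<close> by simp_all
    then show "n \<le> N * (n div N) + N"
      by linarith
  qed (use assms in \<open>auto intro: less_imp_le[OF real_root_gt_zero]\<close>)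
  finally show ?thesis
    using \<open>0 < \<theta>\<close> by (simp add: field_simps)
qed

lemma summable_norm_suminf_le_geometric:
  fixes x :: "nat \<Rightarrow> 'a::banach"
  assumes "\<And>n. norm (x n) \<le> c * \<rho> ^ n" and "0 \<le> \<rho>" and "\<rho> < 1"
  shows "summable x \<and> norm (suminf x) \<le> c / (1 - \<rho>)"
proof -
  have sums: "(\<lambda>n. c * \<rho> ^ n) sums (c * (1 / (1 - \<rho>)))"
    using assms by (intro sums_mult geometric_sums) simp
  have "summable x"
    by (rule summable_comparison_test'[OF sums_summable[OF sums], of 0]) (use assms(1) in auto)
  moreover have "norm (suminf x) \<le> c * (1 / (1 - \<rho>))"
    using norm_suminf_le[OF assms(1) sums_summable[OF sums]] sums_unique[OF sums] by simp
  ultimately show ?thesis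
    by simp
qed

lemma mpow_apply_centred_series:
  fixes P :: "'e::finite \<Rightarrow> 'e \<Rightarrow> real"
  assumes st: "stochastic P" and "irreducible_mc P" and "aperiodic_mc P"
    and inv: "invariant_prob P \<mu>"
  obtains K where "0 \<le> K"
    and "\<And>(f :: 'e \<Rightarrow> 'a::banach) b i. (\<Sum>j\<in>UNIV. \<mu> j *\<^sub>R f j) = 0 \<Longrightarrow> (\<And>j. norm (f j) \<le> b) \<Longrightarrow>
      summable (\<lambda>n. mpow_apply P n f i) \<and> norm (\<Sum>n. mpow_apply P n f i) \<le> K * b"
proof -
  obtain N \<delta> where "0 < N" "0 < \<delta>" "\<delta> \<le> 1/2" and doeblin: "\<And>i j. \<delta> \<le> mpow P N i j"
    using primitive_doeblin[OF assms(1-3)] by blast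
  define \<theta> where "\<theta> = 1 - \<delta>"
  define \<rho> where "\<rho> = root N \<theta>"
  have \<theta>: "1/2 \<le> \<theta>" "\<theta> < 1"
    using \<open>0 < \<delta>\<close> \<open>\<delta> \<le> 1/2\<close> by (auto simp: \<theta>_def)
  have \<rho>: "0 < \<rho>" "\<rho> < 1"
    using \<theta> \<open>0 < N\<close> by (auto simp: \<rho>_def real_root_gt_zero)
  have "summable (\<lambda>n. mpow_apply P n f i) \<and> norm (\<Sum>n. mpow_apply P n f i) \<le> 1 / (\<theta> * (1 - \<rho>)) * b"
    if centred: "(\<Sum>j\<in>UNIV. \<mu> j *\<^sub>R f j) = 0" and bound: "\<And>j. norm (f j) \<le> b"
    for f :: "'e \<Rightarrow> 'a" and b i
  proof -
    have "0 \<le> b"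
      using bound norm_ge_zero order_trans by blast
    have "norm (mpow_apply P n f i) \<le> b / \<theta> * \<rho> ^ n" for n
    proof -
      have "norm (mpow_apply P (N * (n div N) + n mod N) f i) \<le> \<theta> ^ (n div N) * b"
        unfolding \<theta>_def using \<open>0 < \<delta>\<close> centred bound
        by (intro norm_mpow_apply_power_contract[OF st inv doeblin]) auto
      also have "\<dots> \<le> \<rho> ^ n / \<theta> * b"
        unfolding \<rho>_def using \<theta> \<open>0 < N\<close> \<open>0 \<le> b\<close> by (intro mult_right_mono power_div_le_root_power) auto
      finally show ?thesis by (simp add: mult_ac)
    qed
    then have "summable (\<lambda>n. mpow_apply P n f i) \<and> norm (\<Sum>n. mpow_apply P n f i) \<le> b / \<theta> / (1 - \<rho>)"
      using \<rho> by (intro summable_norm_suminf_le_geometric) auto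
    then show ?thesis
      by simp
  qed
  moreover have "0 \<le> 1 / (\<theta> * (1 - \<rho>))"
    using \<theta> \<rho> by simp
  ultimately show ?thesis
    using that by blast
qed

section \<open>The reflected kernel\<close>

lemma dirs_eq_axis: "(dirs :: (real^'d) set) = range (\<lambda>l. axis l 1) \<union> range (\<lambda>l. axis l (-1))"
  by (auto simp: dirs_def)

lemma axis_in_dirs [simp]: "axis l 1 \<in> dirs" "axis l (-1) \<in> dirs"
  by (auto simp: dirs_def)

lemma finite_dirs [simp]: "finite (dirs :: (real^'d) set)"
  unfolding dirs_eq_axis by simp

lemma norm_dirs: "u \<in> dirs \<Longrightarrow> norm (u :: real^'d) = 1"
proof -
  have "axis l (-1::real) = - axis l 1" for l :: 'd
    by (simp add: vec_eq_iff axis_def)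
  then show "u \<in> dirs \<Longrightarrow> norm u = 1"
    by (auto simp: dirs_def)
qed

lemma axis_one_neq_axis_minus_one: "axis l (1::real) \<noteq> axis l' (-1)"
  by (simp add: axis_eq_axis)

lemma sum_dirs_component:
  "(\<Sum>u\<in>(dirs :: (real^'d) set). F u * u $ l) = F (axis l 1) - F (axis l (-1))"
proof -
  have inj: "inj (\<lambda>l. axis l c :: real^'d)" if "c \<noteq> 0" for c :: real
    using that by (auto intro!: injI simp: axis_eq_axis)
  have pick: "(\<Sum>l'\<in>UNIV. F (axis l' c) * (axis l' c :: real^'d) $ l) = F (axis l c) * c" for c
    by (simp add: axis_def if_distrib cong: if_cong)
  have "(\<Sum>u\<in>(dirs :: (real^'d) set). F u * u $ l)
     = (\<Sum>u\<in>range (\<lambda>l. axis l 1). F u * u $ l) + (\<Sum>u\<in>range (\<lambda>l. axis l (-1)). F u * u $ l)"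
    unfolding dirs_eq_axis using axis_one_neq_axis_minus_one by (intro sum.union_disjoint) auto
  also have "\<dots> = F (axis l 1) - F (axis l (-1))"
    using pick[of 1] pick[of "-1"] by (simp add: sum.reindex[OF inj])
  finally show ?thesis .
qed

lemma qref_axis_plus:
  "qref p k y (axis l 1) =
    (if y $ l = 1 then 0
     else if y $ l = 0 then p k y (axis l 1) + p k y (axis l (-1))
     else p k y (axis l 1))"
proof -
  have "(SOME l'. axis l (1::real) = axis l' 1) = l"
    by (rule some_equality) (auto simp: axis_eq_axis)
  then show ?thesis
    unfolding qref_def by auto
qed

lemma qref_axis_minus:
  "qref p k y (axis l (-1)) =
    (if y $ l = 0 then 0
     else if y $ l = 1 then p k y (axis l 1) + p k y (axis l (-1))
     else p k y (axis l (-1)))"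
proof -
  have "(SOME l'. axis l (-1::real) = axis l' (-1)) = l"
    by (rule some_equality) (auto simp: axis_eq_axis)
  moreover have "\<not> (\<exists>l'. axis l (-1::real) = axis l' 1)"
    using axis_one_neq_axis_minus_one by metis
  ultimately show ?thesis
    unfolding qref_def by auto
qed

lemma qref_in_unit_interval:
  fixes p :: "'e \<Rightarrow> real^'d \<Rightarrow> real^'d \<Rightarrow> real"
  assumes nonneg: "\<forall>k y u. u \<in> dirs \<longrightarrow> 0 \<le> p k y u"
    and sum_1: "\<forall>k y. (\<Sum>u\<in>dirs. p k y u) = 1"
  shows "qref p k y u \<in> {0..1}"
proof -
  have pair: "p k y (axis l 1) + p k y (axis l (-1)) \<le> 1" for l
  proof -
    have "p k y (axis l 1) + p k y (axis l (-1)) = (\<Sum>u\<in>{axis l 1, axis l (-1)}. p k y u)"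
      using axis_one_neq_axis_minus_one[of l l] by simp
    also have "\<dots> \<le> (\<Sum>u\<in>dirs. p k y u)"
      using nonneg by (intro sum_mono2) auto
    finally show ?thesis
      using sum_1 by simp
  qed
  have "0 \<le> p k y (axis l c)" if "c = 1 \<or> c = -1" for l c
    using nonneg that by auto
  then show ?thesis
    using pair unfolding qref_def
    by (auto simp: qref_axis_plus qref_axis_minus Let_def
        intro: order_trans[OF _ pair] add_increasing add_increasing2)
qed

definition reflection_drift :: "('e \<Rightarrow> real^'d \<Rightarrow> real^'d \<Rightarrow> real) \<Rightarrow> 'e \<Rightarrow> real^'d \<Rightarrow> real^'d" where
  "reflection_drift p k y = rdrift p k y - drift p k y"

lemma reflection_drift_component:
  "reflection_drift p k y $ l =
     (if y $ l = 1 then - 2 * p k y (axis l 1) else if y $ l = 0 then 2 * p k y (axis l (-1)) else 0)"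
proof -
  have "reflection_drift p k y $ l = (\<Sum>u\<in>dirs. (qref p k y u - p k y u) * u $ l)"
    by (simp add: reflection_drift_def rdrift_def drift_def sum_subtractf left_diff_distrib)
  also have "\<dots> = (qref p k y (axis l 1) - p k y (axis l 1)) - (qref p k y (axis l (-1)) - p k y (axis l (-1)))"
    by (rule sum_dirs_component)
  finally show ?thesis
    unfolding qref_axis_plus qref_axis_minus by auto
qed

lemma reflection_drift_pos_imp_lower_face:
  assumes "\<forall>k y u. u \<in> dirs \<longrightarrow> 0 \<le> p k y u" and "0 < reflection_drift p k y $ l"
  shows "y $ l = 0"
  using assms(2) assms(1)[rule_format, of "axis l 1" k y]
  by (auto simp: reflection_drift_component split: if_splits)

lemma reflection_drift_neg_imp_upper_face:
  assumes "\<forall>k y u. u \<in> dirs \<longrightarrow> 0 \<le> p k y u" and "reflection_drift p k y $ l < 0"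
  shows "y $ l = 1"
  using assms(2) assms(1)[rule_format, of "axis l (-1)" k y]
  by (auto simp: reflection_drift_component split: if_splits)

section \<open>Regularity of the drift and of the corrector\<close>

lemma C2_bdd_lipschitz:
  fixes f :: "real^'d \<Rightarrow> real"
  assumes "C2_bdd f"
  obtains B where "\<And>y y'. \<bar>f y - f y'\<bar> \<le> B * norm (y - y')"
proof -
  obtain Df :: "real^'d \<Rightarrow> ((real^'d) \<Rightarrow>\<^sub>L real)" and B
    where deriv: "\<And>y. (f has_derivative blinfun_apply (Df y)) (at y)" and bound: "\<And>y. norm (Df y) \<le> B"
    using assms unfolding C2_bdd_def by blast
  have "norm (f y - f y') \<le> B * norm (y - y')" for y y'
    using deriv bound
    by (intro differentiable_bound[of UNIV f "\<lambda>x. blinfun_apply (Df x)"])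
       (auto simp: norm_blinfun.rep_eq has_derivative_at_withinI)
  then show ?thesis
    using that[of B] by simp
qed

lemma drift_lipschitz:
  fixes p :: "'e::finite \<Rightarrow> real^'d \<Rightarrow> real^'d \<Rightarrow> real"
  assumes "\<forall>k u. u \<in> dirs \<longrightarrow> C2_bdd (\<lambda>y. p k y u)"
  obtains L :: real where "0 \<le> L" and "\<And>k y y'. norm (drift p k y - drift p k y') \<le> L * norm (y - y')"
proof -
  have "\<forall>k u. \<exists>B. u \<in> dirs \<longrightarrow> (\<forall>y y'. \<bar>p k y u - p k y' u\<bar> \<le> B * norm (y - y'))"
    using assms C2_bdd_lipschitz by metis
  then obtain B where B: "\<And>k u y y'. u \<in> dirs \<Longrightarrow> \<bar>p k y u - p k y' u\<bar> \<le> B k u * norm (y - y')"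
    by metis
  define L where "L = (\<Sum>k\<in>UNIV. \<Sum>u\<in>dirs. \<bar>B k u\<bar>)"
  have "norm (drift p k y - drift p k y') \<le> L * norm (y - y')" for k y y'
  proof -
    have "norm (drift p k y - drift p k y') = norm (\<Sum>u\<in>dirs. (p k y u - p k y' u) *\<^sub>R u)"
      by (simp add: drift_def sum_subtractf scaleR_diff_left)
    also have "\<dots> \<le> (\<Sum>u\<in>dirs. \<bar>B k u\<bar> * norm (y - y'))"
    proof (intro order_trans[OF norm_sum] sum_mono)
      fix u :: "real^'d" assume "u \<in> dirs"
      then have "\<bar>p k y u - p k y' u\<bar> \<le> \<bar>B k u\<bar> * norm (y - y')"
        using B[of u k y y'] by (meson abs_ge_self mult_right_mono norm_ge_zero order_trans)
      then show "norm ((p k y u - p k y' u) *\<^sub>R u) \<le> \<bar>B k u\<bar> * norm (y - y')"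
        using norm_dirs[OF \<open>u \<in> dirs\<close>] by simp
    qed
    also have "\<dots> \<le> L * norm (y - y')"
    proof (unfold sum_distrib_right[symmetric], rule mult_right_mono)
      show "(\<Sum>u\<in>dirs. \<bar>B k u\<bar>) \<le> L"
        unfolding L_def by (rule member_le_sum[where f = "\<lambda>k. \<Sum>u\<in>dirs. \<bar>B k u\<bar>"]) (auto intro: sum_nonneg)
    qed simp
    finally show ?thesis .
  qed
  moreover have "0 \<le> L"
    unfolding L_def by (intro sum_nonneg) auto
  ultimately show ?thesis
    using that by blast
qed

lemma norm_drift_le_1:
  assumes "\<forall>k y u. u \<in> dirs \<longrightarrow> 0 \<le> p k y u" and "\<forall>k y. (\<Sum>u\<in>dirs. p k y u) = 1"
  shows "norm (drift p k y) \<le> 1"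
proof -
  have "norm (drift p k y) \<le> (\<Sum>u\<in>dirs. norm (p k y u *\<^sub>R u))"
    unfolding drift_def by (rule norm_sum)
  also have "\<dots> = (\<Sum>u\<in>dirs. p k y u)"
    using assms(1) norm_dirs by (intro sum.cong) auto
  finally show ?thesis
    using assms(2) by simp
qed

lemma corr_eq_suminf_mpow_apply: "corr P p i y = (\<Sum>n. mpow_apply P n (\<lambda>j. drift p j y) i)"
  by (simp add: corr_def mpow_apply_def)

lemma corr_bounded_lipschitz:
  fixes P :: "'e::finite \<Rightarrow> 'e \<Rightarrow> real" and p :: "'e \<Rightarrow> real^'d \<Rightarrow> real^'d \<Rightarrow> real"
  assumes "stochastic P" and "irreducible_mc P" and "aperiodic_mc P" and "invariant_prob P \<mu>"
    and nonneg: "\<forall>k y u. u \<in> dirs \<longrightarrow> 0 \<le> p k y u"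
    and sum_1: "\<forall>k y. (\<Sum>u\<in>dirs. p k y u) = 1"
    and smooth: "\<forall>k u. u \<in> dirs \<longrightarrow> C2_bdd (\<lambda>y. p k y u)"
    and centred: "\<forall>y. (\<Sum>k\<in>UNIV. \<mu> k *\<^sub>R drift p k y) = 0"
  obtains V Lv :: real where "0 \<le> V" and "0 \<le> Lv" and "\<And>i y. norm (corr P p i y) \<le> V"
    and "\<And>i y y'. norm (corr P p i y - corr P p i y') \<le> Lv * norm (y - y')"
proof -
  obtain K where "0 \<le> K" and K: "\<And>(f::'e \<Rightarrow> real^'d) b i. (\<Sum>j\<in>UNIV. \<mu> j *\<^sub>R f j) = 0 \<Longrightarrow>
      (\<And>j. norm (f j) \<le> b) \<Longrightarrow> summable (\<lambda>n. mpow_apply P n f i) \<and> norm (\<Sum>n. mpow_apply P n f i) \<le> K * b"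
    using mpow_apply_centred_series[OF assms(1-4)] by blast
  obtain L where "0 \<le> L" and L: "\<And>k y y'. norm (drift p k y - drift p k y') \<le> L * norm (y - y')"
    using drift_lipschitz[OF smooth] by blast
  have series: "summable (\<lambda>n. mpow_apply P n (\<lambda>j. drift p j y) i) \<and> norm (corr P p i y) \<le> K" for i y
    using K[of "\<lambda>j. drift p j y" 1 i] centred norm_drift_le_1[OF nonneg sum_1]
    unfolding corr_eq_suminf_mpow_apply by simp
  have "norm (corr P p i y - corr P p i y') \<le> K * L * norm (y - y')" for i y y'
  proof -
    have "corr P p i y - corr P p i y' = (\<Sum>n. mpow_apply P n (\<lambda>j. drift p j y - drift p j y') i)"
      unfolding corr_eq_suminf_mpow_apply mpow_apply_diff using series
      by (intro suminf_diff) auto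
    moreover have "(\<Sum>j\<in>UNIV. \<mu> j *\<^sub>R (drift p j y - drift p j y')) = 0"
      using centred by (simp add: scaleR_diff_right sum_subtractf)
    ultimately show ?thesis
      using K[of "\<lambda>j. drift p j y - drift p j y'" "L * norm (y - y')" i] L by (simp add: mult.assoc)
  qed
  then show ?thesis
    using that[of K "K * L"] series \<open>0 \<le> K\<close> \<open>0 \<le> L\<close> by simp
qed

lemma norm_cm_le:
  fixes p :: "'e::finite \<Rightarrow> real^'d \<Rightarrow> real^'d \<Rightarrow> real" and Lv L :: real
  assumes nonneg: "\<forall>k y u. u \<in> dirs \<longrightarrow> 0 \<le> p k y u"
    and sum_1: "\<forall>k y. (\<Sum>u\<in>dirs. p k y u) = 1"
    and Lv: "\<And>i y y'. norm (corr P p i y - corr P p i y') \<le> Lv * norm (y - y')"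
    and L: "\<And>k y y'. norm (drift p k y - drift p k y') \<le> L * norm (y - y')"
    and "1 \<le> m"
  shows "norm (cm P p m i y) \<le> card (dirs :: (real^'d) set) * (Lv + L) / m"
proof -
  have "norm (qref p i y u *\<^sub>R
      ((corr P p i (y + inverse m *\<^sub>R u) - drift p i (y + inverse m *\<^sub>R u)) - (corr P p i y - drift p i y)))
    \<le> (Lv + L) / m" if "u \<in> dirs" for u :: "real^'d"
  proof -
    define y' where "y' = y + inverse m *\<^sub>R u"
    have "norm (y' - y) = 1 / m"
      using norm_dirs[OF that] \<open>1 \<le> m\<close> by (simp add: y'_def divide_inverse)
    then have "norm ((corr P p i y' - drift p i y') - (corr P p i y - drift p i y)) \<le> (Lv + L) / m"
      using Lv[of i y' y] L[of i y' y] norm_triangle_ineq4[of "corr P p i y' - corr P p i y" "drift p i y' - drift p i y"]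
      by (simp add: algebra_simps add_divide_distrib)
    moreover have "\<bar>qref p i y u\<bar> \<le> 1"
      using qref_in_unit_interval[OF nonneg sum_1, of i y u] by simp
    ultimately show ?thesis
      unfolding y'_def[symmetric] using mult_mono[of "\<bar>qref p i y u\<bar>" 1] by simp
  qed
  then have "norm (cm P p m i y) \<le> (\<Sum>u\<in>(dirs :: (real^'d) set). (Lv + L) / m)"
    unfolding cm_def by (intro order_trans[OF norm_sum] sum_mono)
  then show ?thesis
    by simp
qed

section \<open>The energy inequality for the reflected walk\<close>

lemma reflected_step_on_grid:
  fixes x u :: "real^'d"
  assumes "x $ l = real z" and "z \<le> m" and "1 \<le> m"
    and "u \<in> dirs" and admissible: "0 < qref p k (inverse (real m) *\<^sub>R x) u"
  shows "(x + u) $ l \<in> real ` {0..m}"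
proof -
  define y where "y = inverse (real m) *\<^sub>R x"
  have y_l: "y $ l = real z / real m"
    using assms(1) by (simp add: y_def divide_inverse mult.commute)
  obtain l' s where u: "u = axis l' s" and "s = 1 \<or> s = -1"
    using \<open>u \<in> dirs\<close> unfolding dirs_def by blast
  then have x_u: "(x + u) $ l = real z + (if l = l' then s else 0)"
    using assms(1) by (simp add: axis_def)
  consider "l \<noteq> l'" | "l' = l" "s = 1" | "l' = l" "s = -1"
    using \<open>s = 1 \<or> s = -1\<close> by blast
  then show ?thesis
  proof cases
    case 1
    then show ?thesis
      using x_u \<open>z \<le> m\<close> by simp
  next
    case 2
    have "0 < qref p k y (axis l 1)"
      using admissible unfolding u 2 y_def .
    then have "y $ l \<noteq> 1"
      unfolding qref_axis_plus by (auto split: if_splits)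
    then have "z + 1 \<le> m"
      using y_l \<open>z \<le> m\<close> \<open>1 \<le> m\<close> by (auto simp: le_less)
    then show ?thesis
      using x_u 2 by (auto intro!: image_eqI[of _ _ "z + 1"])
  next
    case 3
    have "0 < qref p k y (axis l (-1))"
      using admissible unfolding u 3 y_def .
    then have "y $ l \<noteq> 0"
      unfolding qref_axis_minus by (auto split: if_splits)
    then have "1 \<le> z"
      using y_l by (cases z) auto
    then show ?thesis
      using x_u \<open>z \<le> m\<close> 3 by (auto simp: of_nat_diff intro!: image_eqI[of _ _ "z - 1"])
  qed
qed

lemma reflected_walk_on_grid:
  fixes R :: "nat \<Rightarrow> real^'d"
  assumes "R 0 = 0" and "1 \<le> m"
    and steps: "\<And>j. R (Suc j) - R j \<in> dirs"
    and admissible: "\<And>j. 0 < qref p (\<xi> j) (inverse (real m) *\<^sub>R R j) (R (Suc j) - R j)"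
  shows "R j $ l \<in> real ` {0..m}"
proof (induction j)
  case 0
  then show ?case
    using \<open>R 0 = 0\<close> by force
next
  case (Suc j)
  then obtain z where "R j $ l = real z" "z \<le> m"
    by auto
  then have "(R j + (R (Suc j) - R j)) $ l \<in> real ` {0..m}"
    using \<open>1 \<le> m\<close> steps admissible by (rule reflected_step_on_grid)
  then show ?case
    by simp
qed

lemma norm_diff_le_in_box:
  fixes x w :: "real^'d" and M :: real
  assumes "\<And>l. x $ l \<in> {0..M}" and "\<And>l. w $ l \<in> {0..M}"
  shows "norm (x - w) \<le> CARD('d) * M"
proof -
  have "norm (x - w) \<le> (\<Sum>l\<in>UNIV. \<bar>(x - w) $ l\<bar>)"
    by (rule norm_le_l1_cart)
  also have "\<dots> \<le> (\<Sum>l\<in>(UNIV :: 'd set). M)"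
  proof (rule sum_mono)
    fix l
    show "\<bar>(x - w) $ l\<bar> \<le> M"
      using assms(1)[of l] assms(2)[of l] by (auto simp: abs_le_iff)
  qed
  finally show ?thesis
    by simp
qed

lemma inner_diff_pos_neg_part:
  fixes x w a :: "real^'d"
  assumes "\<And>l. 0 < a $ l \<Longrightarrow> x $ l = 0" and "\<And>l. a $ l < 0 \<Longrightarrow> x $ l = M"
  shows "(x - w) \<bullet> a = - (w \<bullet> pos_part a) - ((M *\<^sub>R ones - w) \<bullet> neg_part a)"
proof -
  have "(x $ l - w $ l) * a $ l = - (w $ l * max (a $ l) 0) - (M - w $ l) * max (- a $ l) 0" for l
    using assms[of l] by (cases "0 < a $ l"; cases "a $ l < 0") (auto simp: algebra_simps)
  then show ?thesis
    by (simp add: inner_vec_def pos_part_def neg_part_def ones_def sum_subtractf sum_negf[symmetric])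
qed

lemma inner_reflection_drift:
  fixes x w :: "real^'d" and M :: real
  assumes "\<forall>k y u. u \<in> dirs \<longrightarrow> 0 \<le> p k y u" and "0 < M"
  shows "(x - w) \<bullet> reflection_drift p k (inverse M *\<^sub>R x)
    = - (w \<bullet> pos_part (reflection_drift p k (inverse M *\<^sub>R x)))
      - ((M *\<^sub>R ones - w) \<bullet> neg_part (reflection_drift p k (inverse M *\<^sub>R x)))"
proof (rule inner_diff_pos_neg_part)
  fix l
  show "x $ l = 0" if "0 < reflection_drift p k (inverse M *\<^sub>R x) $ l"
    using reflection_drift_pos_imp_lower_face[OF assms(1) that] \<open>0 < M\<close> by simp
  show "x $ l = M" if "reflection_drift p k (inverse M *\<^sub>R x) $ l < 0"
    using reflection_drift_neg_imp_upper_face[OF assms(1) that] \<open>0 < M\<close> by (simp add: field_simps)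
qed

lemma inner_cm_le:
  fixes p :: "'e::finite \<Rightarrow> real^'d \<Rightarrow> real^'d \<Rightarrow> real" and x w :: "real^'d" and Lv L :: real
  assumes "\<forall>k y u. u \<in> dirs \<longrightarrow> 0 \<le> p k y u" and "\<forall>k y. (\<Sum>u\<in>dirs. p k y u) = 1"
    and "\<And>i y y'. norm (corr P p i y - corr P p i y') \<le> Lv * norm (y - y')"
    and "\<And>k y y'. norm (drift p k y - drift p k y') \<le> L * norm (y - y')"
    and "1 \<le> m" and "\<And>l. x $ l \<in> {0..real m}" and "\<And>l. w $ l \<in> {0..real m}"
  shows "(x - w) \<bullet> cm P p m i y \<le> real CARD('d) * real (card (dirs :: (real^'d) set)) * (Lv + L)"
proof -
  have "norm (x - w) * norm (cm P p m i y) \<le> (CARD('d) * real m) * (card (dirs :: (real^'d) set) * (Lv + L) / m)"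
    using norm_diff_le_in_box[of x "real m" w] norm_cm_le[of p P Lv L m i y] assms
    by (intro mult_mono) auto
  then show ?thesis
    using norm_cauchy_schwarz[of "x - w" "cm P p m i y"] \<open>1 \<le> m\<close> by simp
qed

lemma norm_add_square_plus_inner:
  fixes D u z v v' a c :: "'a::real_inner"
  assumes "u = z - v' + v + a + c" and "norm u = 1"
  shows "(norm (D + u))\<^sup>2 + 2 * ((D + u) \<bullet> v') = (norm D)\<^sup>2 + 2 * (D \<bullet> v) + 1
     + 2 * (D \<bullet> z) + 2 * (D \<bullet> a) + 2 * (D \<bullet> c) + 2 * (u \<bullet> v')"
proof -
  have "(norm (D + u))\<^sup>2 = (norm D)\<^sup>2 + 2 * (D \<bullet> u) + (norm u)\<^sup>2"
    by (simp add: power2_norm_eq_inner inner_add inner_commute)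
  moreover have "D \<bullet> u = D \<bullet> z - D \<bullet> v' + D \<bullet> v + D \<bullet> a + D \<bullet> c"
    using assms(1) by (simp add: inner_add_right inner_diff_right)
  ultimately show ?thesis
    using assms(2) by (simp add: inner_add_left algebra_simps)
qed

lemma telescoping_le:
  fixes F b z :: "nat \<Rightarrow> real" and K :: real
  assumes "p \<le> q" and "\<And>k. p \<le> k \<Longrightarrow> k < q \<Longrightarrow> F (Suc k) + b k \<le> F k + K + z k"
  shows "F q + (\<Sum>k\<in>{p..<q}. b k) \<le> F p + K * (q - p) + (\<Sum>k\<in>{p..<q}. z k)"
  using assms
proof (induction q rule: dec_induct)
  case (step q)
  then have "F q + (\<Sum>k\<in>{p..<q}. b k) \<le> F p + K * (q - p) + (\<Sum>k\<in>{p..<q}. z k)"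
    and "F (Suc q) + b q \<le> F q + K + z q"
    by simp_all
  then show ?case
    using \<open>p \<le> q\<close> by (simp add: of_nat_diff algebra_simps)
qed simp

definition corr_energy :: "('e::finite \<Rightarrow> 'e \<Rightarrow> real) \<Rightarrow> ('e \<Rightarrow> real^'d \<Rightarrow> real^'d \<Rightarrow> real) \<Rightarrow> nat
    \<Rightarrow> (nat \<Rightarrow> 'e) \<Rightarrow> (nat \<Rightarrow> real^'d) \<Rightarrow> nat \<Rightarrow> nat \<Rightarrow> real" where
  "corr_energy P p m \<xi> R n k =
     (norm (R k - R n))\<^sup>2 + 2 * ((R k - R n) \<bullet> corr P p (\<xi> k) (inverse (real m) *\<^sub>R R k))"

lemma corr_energy_step:
  fixes P :: "'e::finite \<Rightarrow> 'e \<Rightarrow> real" and p :: "'e \<Rightarrow> real^'d \<Rightarrow> real^'d \<Rightarrow> real"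
    and R :: "nat \<Rightarrow> real^'d" and V Lv L :: real
  assumes nonneg: "\<forall>k y u. u \<in> dirs \<longrightarrow> 0 \<le> p k y u"
    and sum_1: "\<forall>k y. (\<Sum>u\<in>dirs. p k y u) = 1"
    and V: "\<And>i y. norm (corr P p i y) \<le> V"
    and Lv: "\<And>i y y'. norm (corr P p i y - corr P p i y') \<le> Lv * norm (y - y')"
    and L: "\<And>k y y'. norm (drift p k y - drift p k y') \<le> L * norm (y - y')"
    and "1 \<le> m"
    and box: "\<And>j l. R j $ l \<in> {0..real m}"
    and step: "R (Suc k) - R k \<in> dirs"
  shows "corr_energy P p m \<xi> R n (Suc k)
      + 2 * ((real m *\<^sub>R ones - R n) \<bullet> neg_part (reflection_drift p (\<xi> k) (inverse (real m) *\<^sub>R R k)))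
      + 2 * (R n \<bullet> pos_part (reflection_drift p (\<xi> k) (inverse (real m) *\<^sub>R R k)))
    \<le> corr_energy P p m \<xi> R n k + (1 + 2 * real CARD('d) * real (card (dirs :: (real^'d) set)) * (Lv + L) + 2 * V)
      + 2 * ((R k - R n) \<bullet> Zsucc P p m \<xi> R k)"
proof -
  define y where "y j = inverse (real m) *\<^sub>R R j" for j
  define D where "D = R k - R n"
  define u where "u = R (Suc k) - R k"
  define a where "a = reflection_drift p (\<xi> k) (y k)"
  define c where "c = cm P p m (\<xi> k) (y k)"
  define v where "v j = corr P p (\<xi> j) (y j)" for j
  have decomp: "u = Zsucc P p m \<xi> R k - v (Suc k) + v k + a + c"
    by (simp add: Zsucc_def Let_def u_def v_def a_def c_def y_def reflection_drift_def algebra_simps)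
  have "corr_energy P p m \<xi> R n (Suc k) = (norm (D + u))\<^sup>2 + 2 * ((D + u) \<bullet> v (Suc k))"
    and "corr_energy P p m \<xi> R n k = (norm D)\<^sup>2 + 2 * (D \<bullet> v k)"
    by (simp_all add: corr_energy_def D_def u_def v_def y_def)
  then have "corr_energy P p m \<xi> R n (Suc k) = corr_energy P p m \<xi> R n k + 1
      + 2 * (D \<bullet> Zsucc P p m \<xi> R k) + 2 * (D \<bullet> a) + 2 * (D \<bullet> c) + 2 * (u \<bullet> v (Suc k))"
    using norm_add_square_plus_inner[OF decomp norm_dirs] step by (simp add: u_def)
  moreover have "D \<bullet> a = - (R n \<bullet> pos_part a) - ((real m *\<^sub>R ones - R n) \<bullet> neg_part a)"
    unfolding D_def a_def y_def using nonneg \<open>1 \<le> m\<close> by (intro inner_reflection_drift) auto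
  moreover have "D \<bullet> c \<le> real CARD('d) * real (card (dirs :: (real^'d) set)) * (Lv + L)"
    unfolding D_def c_def by (rule inner_cm_le[OF nonneg sum_1 Lv L \<open>1 \<le> m\<close> box box])
  moreover have "u \<bullet> v (Suc k) \<le> V"
    using norm_cauchy_schwarz[of u "v (Suc k)"] norm_dirs[OF step] V[of "\<xi> (Suc k)" "y (Suc k)"]
    by (simp add: u_def v_def)
  ultimately show ?thesis
    unfolding a_def D_def y_def by linarith
qed

lemma corr_energy_diff_norm_square_le:
  fixes P :: "'e::finite \<Rightarrow> 'e \<Rightarrow> real" and R :: "nat \<Rightarrow> real^'d" and V :: real
  assumes V: "\<And>i y. norm (corr P p i y) \<le> V"
    and box: "\<And>j l. R j $ l \<in> {0..real m}"
  shows "\<bar>corr_energy P p m \<xi> R n k - (norm (R k - R n))\<^sup>2\<bar> \<le> 2 * (real CARD('d) * real m * V)"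
proof -
  have "\<bar>(R k - R n) \<bullet> corr P p (\<xi> k) (inverse (real m) *\<^sub>R R k)\<bar>
      \<le> norm (R k - R n) * norm (corr P p (\<xi> k) (inverse (real m) *\<^sub>R R k))"
    by (rule Cauchy_Schwarz_ineq2)
  also have "\<dots> \<le> (real CARD('d) * real m) * V"
    using norm_diff_le_in_box[OF box box] V by (rule mult_mono) simp_all
  finally have "\<bar>(R k - R n) \<bullet> corr P p (\<xi> k) (inverse (real m) *\<^sub>R R k)\<bar> \<le> real CARD('d) * real m * V" .
  then show ?thesis
    by (simp add: corr_energy_def)
qed

lemma reflected_walk_energy_inequality:
  fixes P :: "'e::finite \<Rightarrow> 'e \<Rightarrow> real" and p :: "'e \<Rightarrow> real^'d \<Rightarrow> real^'d \<Rightarrow> real"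
    and R :: "nat \<Rightarrow> real^'d" and V Lv L :: real
  assumes nonneg: "\<forall>k y u. u \<in> dirs \<longrightarrow> 0 \<le> p k y u"
    and sum_1: "\<forall>k y. (\<Sum>u\<in>dirs. p k y u) = 1"
    and V: "\<And>i y. norm (corr P p i y) \<le> V" and "0 \<le> V"
    and Lv: "\<And>i y y'. norm (corr P p i y - corr P p i y') \<le> Lv * norm (y - y')" and "0 \<le> Lv"
    and L: "\<And>k y y'. norm (drift p k y - drift p k y') \<le> L * norm (y - y')" and "0 \<le> L"
    and "1 \<le> m" and "R 0 = 0"
    and steps: "\<And>j. R (Suc j) - R j \<in> dirs"
    and admissible: "\<And>j. 0 < qref p (\<xi> j) (inverse (real m) *\<^sub>R R j) (R (Suc j) - R j)"
    and "p' \<le> q'"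
  shows "(norm (R q' - R n))\<^sup>2
      + 2 * (\<Sum>k\<in>{p'..<q'}. (real m *\<^sub>R ones - R n) \<bullet> neg_part (reflection_drift p (\<xi> k) (inverse (real m) *\<^sub>R R k)))
      + 2 * (\<Sum>k\<in>{p'..<q'}. R n \<bullet> pos_part (reflection_drift p (\<xi> k) (inverse (real m) *\<^sub>R R k)))
    \<le> (norm (R p' - R n))\<^sup>2
      + (1 + 2 * real CARD('d) * real (card (dirs :: (real^'d) set)) * (Lv + L) + (2 + 4 * real CARD('d)) * V) * (real (q' - p') + real m)
      + 2 * (\<Sum>k\<in>{p'..<q'}. (R k - R n) \<bullet> Zsucc P p m \<xi> R k)"
proof -
  define K where "K = 1 + 2 * real CARD('d) * real (card (dirs :: (real^'d) set)) * (Lv + L) + 2 * V"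
  define E where "E = corr_energy P p m \<xi> R n"
  define a where "a k = reflection_drift p (\<xi> k) (inverse (real m) *\<^sub>R R k)" for k
  define b where "b k = 2 * ((real m *\<^sub>R ones - R n) \<bullet> neg_part (a k)) + 2 * (R n \<bullet> pos_part (a k))" for k
  define z where "z k = 2 * ((R k - R n) \<bullet> Zsucc P p m \<xi> R k)" for k
  have box: "R j $ l \<in> {0..real m}" for j l
    using reflected_walk_on_grid[OF \<open>R 0 = 0\<close> \<open>1 \<le> m\<close> steps admissible, of j l] by auto
  have near: "\<bar>E j - (norm (R j - R n))\<^sup>2\<bar> \<le> 2 * (real CARD('d) * real m * V)" for j
    unfolding E_def by (rule corr_energy_diff_norm_square_le[OF V box])
  have "E (Suc k) + b k \<le> E k + K + z k" for k
    using corr_energy_step[where R = R, OF nonneg sum_1 V Lv L \<open>1 \<le> m\<close> box steps, of \<xi> n k]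
    unfolding E_def K_def a_def b_def z_def by linarith
  then have "E q' + sum b {p'..<q'} \<le> E p' + K * (q' - p') + sum z {p'..<q'}"
    using \<open>p' \<le> q'\<close> by (intro telescoping_le)
  moreover have "(1 + 2 * real CARD('d) * real (card (dirs :: (real^'d) set)) * (Lv + L) + (2 + 4 * real CARD('d)) * V)
        * (real (q' - p') + real m)
      = K * (q' - p') + 4 * (real CARD('d) * real m * V) + (K * m + 4 * (real CARD('d) * V * (q' - p')))"
    by (simp add: K_def algebra_simps)
  moreover have "0 \<le> K * m + 4 * (real CARD('d) * V * (q' - p'))"
    using \<open>0 \<le> V\<close> \<open>0 \<le> Lv\<close> \<open>0 \<le> L\<close> by (simp add: K_def)
  moreover have "sum b {p'..<q'} = 2 * (\<Sum>k\<in>{p'..<q'}. (real m *\<^sub>R ones - R n) \<bullet> neg_part (a k))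
      + 2 * (\<Sum>k\<in>{p'..<q'}. R n \<bullet> pos_part (a k))"
    and "sum z {p'..<q'} = 2 * (\<Sum>k\<in>{p'..<q'}. (R k - R n) \<bullet> Zsucc P p m \<xi> R k)"
    by (simp_all add: b_def z_def sum.distrib sum_distrib_left)
  ultimately show ?thesis
    using near[of p'] near[of q'] unfolding a_def abs_le_iff by linarith
qed

theorem lemma5p2:
  fixes P :: "'e::finite \<Rightarrow> 'e \<Rightarrow> real"
    and \<mu> :: "'e \<Rightarrow> real"
    and p :: "'e \<Rightarrow> real^'d \<Rightarrow> real^'d \<Rightarrow> real"
  assumes "stochastic P" and "irreducible_mc P" and "aperiodic_mc P"
    and "invariant_prob P \<mu>"
    and "\<forall>k y u. u \<in> dirs \<longrightarrow> 0 \<le> p k y u"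
    and "\<forall>k y. (\<Sum>u\<in>dirs. p k y u) = 1"
    and "\<forall>k u. u \<in> dirs \<longrightarrow> C2_bdd (\<lambda>y. p k y u)"
    and "\<forall>y. (\<Sum>k\<in>UNIV. \<mu> k *\<^sub>R drift p k y) = 0"
  shows "\<exists>C::real. \<forall>m::nat. 1 \<le> m \<longrightarrow>
    (\<forall>(\<xi>::nat \<Rightarrow> 'e) (R::nat \<Rightarrow> real^'d).
      R 0 = 0 \<and>
      (\<forall>j. 0 < P (\<xi> j) (\<xi> (Suc j)) \<and> R (Suc j) - R j \<in> dirs \<and>
           0 < qref p (\<xi> j) (inverse (real m) *\<^sub>R R j) (R (Suc j) - R j))
      \<longrightarrow>
      (\<forall>n p' q'. 1 \<le> n \<and> n \<le> p' \<and> p' \<le> q' \<longrightarrow>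
         (norm (R q' - R n))\<^sup>2
         + 2 * (\<Sum>k\<in>{p'..<q'}. (real m *\<^sub>R ones - R n) \<bullet>
                  neg_part (rdrift p (\<xi> k) (inverse (real m) *\<^sub>R R k) - drift p (\<xi> k) (inverse (real m) *\<^sub>R R k)))
         + 2 * (\<Sum>k\<in>{p'..<q'}. R n \<bullet>
                  pos_part (rdrift p (\<xi> k) (inverse (real m) *\<^sub>R R k) - drift p (\<xi> k) (inverse (real m) *\<^sub>R R k)))
         \<le> (norm (R p' - R n))\<^sup>2 + C * (real (q' - p') + real m)
           + 2 * (\<Sum>k\<in>{p'..<q'}. (R k - R n) \<bullet> Zsucc P p m \<xi> R k)))"
proof -
  obtain V Lv where "0 \<le> V" "0 \<le> Lv" and V: "\<And>i y. norm (corr P p i y) \<le> V"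
    and Lv: "\<And>i y y'. norm (corr P p i y - corr P p i y') \<le> Lv * norm (y - y')"
    using corr_bounded_lipschitz[OF assms] by blast
  obtain L where "0 \<le> L" and L: "\<And>k y y'. norm (drift p k y - drift p k y') \<le> L * norm (y - y')"
    using drift_lipschitz[OF assms(7)] by blast
  show ?thesis
    unfolding reflection_drift_def[symmetric]
    using reflected_walk_energy_inequality[OF assms(5,6) V \<open>0 \<le> V\<close> Lv \<open>0 \<le> Lv\<close> L \<open>0 \<le> L\<close>]
    by blast
qed

end
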